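(* Let $k\ge 3$. A graph $G$ is $k$-chromatic and mixed-double-critical if and only if $G$ is the complete graph $K_k$.
   Context: All graphs are finite and simple. A graph $G$ is (vertex-)critical if $\chi(G-v)<\chi(G)$ for every vertex $v$. A vertex-critical $k$-chromatic graph $G$ is mixed-double-critical if for every vertex $x\in V(G)$ and every edge $e\in E(G-x)$ we have $\chi(G-x-e)\le\chi(G)-2$. *)

theory Defs
  imports Main
begin

type_synonym 'a graph = "'a set \<times> 'a set set"

definition verts :: "'a graph \<Rightarrow> 'a set" where "verts G = fst G"
definition edges :: "'a graph \<Rightarrow> 'a set set" where "edges G = snd G"

definition finite_simple_graph :: "'a graph \<Rightarrow> bool" where
  "finite_simple_graph G \<longleftrightarrow> finite (verts G) \<and>
     (\<forall>e\<in>edges G. e \<subseteq> verts G \<and> card e = 2)"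

definition colorable :: "'a graph \<Rightarrow> nat \<Rightarrow> bool" where
  "colorable G k \<longleftrightarrow> (\<exists>f. (\<forall>v\<in>verts G. f v < k) \<and>
     (\<forall>u\<in>verts G. \<forall>v\<in>verts G. {u, v} \<in> edges G \<longrightarrow> f u \<noteq> f v))"

definition chromatic_number :: "'a graph \<Rightarrow> nat" where
  "chromatic_number G = (LEAST k. colorable G k)"

definition delete_vertex :: "'a graph \<Rightarrow> 'a \<Rightarrow> 'a graph" where
  "delete_vertex G x = (verts G - {x}, {e\<in>edges G. x \<notin> e})"

definition delete_edge :: "'a graph \<Rightarrow> 'a set \<Rightarrow> 'a graph" where
  "delete_edge G e = (verts G, edges G - {e})"

definition vertex_critical :: "'a graph \<Rightarrow> bool" where
  "vertex_critical G \<longleftrightarrow>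
     (\<forall>v\<in>verts G. chromatic_number (delete_vertex G v) < chromatic_number G)"

definition mixed_double_critical :: "'a graph \<Rightarrow> bool" where
  "mixed_double_critical G \<longleftrightarrow> vertex_critical G \<and>
     (\<forall>x\<in>verts G. \<forall>e\<in>edges (delete_vertex G x).
        chromatic_number (delete_edge (delete_vertex G x) e) \<le> chromatic_number G - 2)"

definition is_complete_graph :: "'a graph \<Rightarrow> nat \<Rightarrow> bool" where
  "is_complete_graph G k \<longleftrightarrow> card (verts G) = k \<and>
     edges G = {e. e \<subseteq> verts G \<and> card e = 2}"

end

theory Submission
  imports Defs
begin

text \<open>Completeness forces \<open>G = K\<^sub>k\<close> to be mixed-double-critical: removing a vertex lowers
the clique size by one, and removing an edge \<open>ab\<close> as well lets \<open>a\<close> and \<open>b\<close> share a colour.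
Conversely, let \<open>G\<close> be \<open>k\<close>-chromatic and mixed-double-critical with \<open>k \<ge> 3\<close>. Vertex
criticality rules out isolated vertices. If \<open>x\<close> and \<open>y\<close> were non-adjacent, pick an edge
\<open>yz\<close>; a \<open>(k - 2)\<close>-colouring of \<open>G - x - yz\<close> extends to a \<open>(k - 1)\<close>-colouring of \<open>G\<close> by
giving both \<open>x\<close> and \<open>y\<close> one new colour. So \<open>G\<close> is complete, and then \<open>|V(G)| = k\<close>.\<close>

lemma finite_simple_graph_edgeD:
  assumes "finite_simple_graph G" "e \<in> edges G"
  shows "e \<subseteq> verts G" "card e = 2"
  using assms by (auto simp: finite_simple_graph_def)

lemma finite_simple_graph_edge_neq:
  "finite_simple_graph G \<Longrightarrow> {u, v} \<in> edges G \<Longrightarrow> u \<noteq> v"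
  using finite_simple_graph_edgeD(2) by fastforce

lemma verts_delete_vertex [simp]: "verts (delete_vertex G x) = verts G - {x}"
  by (simp add: delete_vertex_def verts_def)

lemma edges_delete_vertex [simp]: "edges (delete_vertex G x) = {e \<in> edges G. x \<notin> e}"
  by (simp add: delete_vertex_def edges_def)

lemma verts_delete_edge [simp]: "verts (delete_edge G e) = verts G"
  by (simp add: delete_edge_def verts_def)

lemma edges_delete_edge [simp]: "edges (delete_edge G e) = edges G - {e}"
  by (simp add: delete_edge_def edges_def)

lemma finite_simple_graph_delete_vertex:
  "finite_simple_graph G \<Longrightarrow> finite_simple_graph (delete_vertex G x)"
  by (auto simp: finite_simple_graph_def)

lemma finite_simple_graph_delete_edge:
  "finite_simple_graph G \<Longrightarrow> finite_simple_graph (delete_edge G e)"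
  by (auto simp: finite_simple_graph_def)

lemma colorable_mono:
  assumes "colorable G m" "m \<le> n"
  shows "colorable G n"
proof -
  obtain f where "\<forall>v\<in>verts G. f v < m"
    "\<forall>u\<in>verts G. \<forall>v\<in>verts G. {u, v} \<in> edges G \<longrightarrow> f u \<noteq> f v"
    using assms(1) unfolding colorable_def by blast
  then show ?thesis
    using assms(2) unfolding colorable_def by (intro exI[of _ f]) auto
qed

lemma colorable_card_verts:
  assumes "finite_simple_graph G"
  shows "colorable G (card (verts G))"
proof -
  have "finite (verts G)"
    using assms by (simp add: finite_simple_graph_def)
  then obtain h where h: "bij_betw h (verts G) {0..<card (verts G)}"
    using ex_bij_betw_finite_nat by blast
  then show ?thesis
    using finite_simple_graph_edge_neq[OF assms]
    unfolding colorable_def by (intro exI[of _ h]) (auto simp: bij_betw_def inj_on_def)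
qed

lemma colorable_chromatic_number:
  "finite_simple_graph G \<Longrightarrow> colorable G (chromatic_number G)"
  unfolding chromatic_number_def by (rule LeastI, rule colorable_card_verts)

lemma chromatic_number_le: "colorable G c \<Longrightarrow> chromatic_number G \<le> c"
  unfolding chromatic_number_def by (rule Least_le)

lemma card_verts_le_if_complete_colorable:
  assumes "finite (verts G)"
    and complete: "\<forall>u\<in>verts G. \<forall>v\<in>verts G. u \<noteq> v \<longrightarrow> {u, v} \<in> edges G"
    and "colorable G c"
  shows "card (verts G) \<le> c"
proof -
  obtain f where f: "\<forall>v\<in>verts G. f v < c"
    "\<forall>u\<in>verts G. \<forall>v\<in>verts G. {u, v} \<in> edges G \<longrightarrow> f u \<noteq> f v"
    using \<open>colorable G c\<close> unfolding colorable_def by blast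
  have "inj_on f (verts G)"
  proof (rule inj_onI, rule ccontr)
    fix u v assume "u \<in> verts G" "v \<in> verts G" "f u = f v" "u \<noteq> v"
    then show False
      using f(2) complete by blast
  qed
  moreover have "f ` verts G \<subseteq> {..<c}"
    using f(1) by auto
  ultimately have "card (verts G) \<le> card {..<c}"
    by (rule card_inj_on_le) simp
  then show ?thesis
    by simp
qed

lemma chromatic_number_complete:
  assumes "finite_simple_graph G"
    and "\<forall>u\<in>verts G. \<forall>v\<in>verts G. u \<noteq> v \<longrightarrow> {u, v} \<in> edges G"
  shows "chromatic_number G = card (verts G)"
proof (rule antisym)
  show "chromatic_number G \<le> card (verts G)"
    by (rule chromatic_number_le[OF colorable_card_verts[OF assms(1)]])
  show "card (verts G) \<le> chromatic_number G"
    by (rule card_verts_le_if_complete_colorable[OF _ assms(2) colorable_chromatic_number[OF assms(1)]])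
      (use assms(1) in \<open>simp add: finite_simple_graph_def\<close>)
qed

lemma edges_eq_all_pairs_iff:
  assumes "finite_simple_graph G"
  shows "edges G = {e. e \<subseteq> verts G \<and> card e = 2} \<longleftrightarrow>
    (\<forall>u\<in>verts G. \<forall>v\<in>verts G. u \<noteq> v \<longrightarrow> {u, v} \<in> edges G)"
proof
  assume "edges G = {e. e \<subseteq> verts G \<and> card e = 2}"
  then show "\<forall>u\<in>verts G. \<forall>v\<in>verts G. u \<noteq> v \<longrightarrow> {u, v} \<in> edges G"
    by simp
next
  assume complete: "\<forall>u\<in>verts G. \<forall>v\<in>verts G. u \<noteq> v \<longrightarrow> {u, v} \<in> edges G"
  have "e \<in> edges G" if "e \<subseteq> verts G" "card e = 2" for e
    using that complete by (auto simp: card_2_iff)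
  then show "edges G = {e. e \<subseteq> verts G \<and> card e = 2}"
    using finite_simple_graph_edgeD[OF assms] by blast
qed

text \<open>Merging \<open>b\<close> into \<open>a\<close> leaves \<open>|V(H)| - 1\<close> vertices, coloured injectively.\<close>

lemma colorable_identify_nonadjacent:
  assumes H: "finite_simple_graph H" and "a \<in> verts H" "b \<in> verts H" "a \<noteq> b"
    and "{a, b} \<notin> edges H"
  shows "colorable H (card (verts H) - 1)"
proof -
  let ?W = "verts H - {b}"
  let ?r = "\<lambda>v. if v = b then a else v"
  have "finite ?W"
    using H by (simp add: finite_simple_graph_def)
  then obtain h where h: "inj_on h ?W" "h ` ?W = {0..<card ?W}"
    using ex_bij_betw_finite_nat unfolding bij_betw_def by blast
  have card_W: "card ?W = card (verts H) - 1"
    using H assms(3) by (simp add: finite_simple_graph_def)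
  have r_W: "?r v \<in> ?W" if "v \<in> verts H" for v
    using that assms(2,4) by auto
  have r_edge: "?r u \<noteq> ?r v" if "{u, v} \<in> edges H" for u v
  proof -
    have "{u, v} \<noteq> {a, b}" "{u, v} \<noteq> {b, a}"
      using assms(5) that by (auto simp: insert_commute)
    then show ?thesis
      using finite_simple_graph_edge_neq[OF H that] by auto
  qed
  have "h (?r v) < card (verts H) - 1" if "v \<in> verts H" for v
    using r_W[OF that] h(2) card_W by (metis atLeastLessThan_iff imageI)
  moreover have "h (?r u) \<noteq> h (?r v)"
    if "u \<in> verts H" "v \<in> verts H" "{u, v} \<in> edges H" for u v
    using inj_on_contraD[OF h(1) r_edge[OF that(3)] r_W[OF that(1)] r_W[OF that(2)]] .
  ultimately show ?thesis
    unfolding colorable_def by (intro exI[of _ "\<lambda>v. h (?r v)"]) blast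
qed

lemma colorable_add_isolated_vertex:
  assumes "\<forall>e\<in>edges G. y \<notin> e" "colorable (delete_vertex G y) m" "0 < m"
  shows "colorable G m"
proof -
  obtain f where f: "\<forall>v\<in>verts G - {y}. f v < m"
    "\<forall>u\<in>verts G - {y}. \<forall>v\<in>verts G - {y}. {u, v} \<in> edges G \<and> y \<notin> {u, v} \<longrightarrow> f u \<noteq> f v"
    using assms(2) unfolding colorable_def by auto
  then show ?thesis
    using assms(1,3) unfolding colorable_def by (intro exI[of _ "f(y := 0)"]) auto
qed

text \<open>The two vertices \<open>x, y\<close> receive the new colour \<open>c\<close>; no edge of \<open>G\<close> joins them, and
every edge missing from the smaller graph meets \<open>{x, y}\<close>.\<close>

lemma colorable_recolor_nonadjacent_pair:
  assumes "finite_simple_graph G" "{x, y} \<notin> edges G" "y \<in> e"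
    and "colorable (delete_edge (delete_vertex G x) e) c"
  shows "colorable G (Suc c)"
proof -
  obtain f where f: "\<forall>v\<in>verts G - {x}. f v < c"
    "\<forall>u\<in>verts G - {x}. \<forall>v\<in>verts G - {x}.
       {u, v} \<in> edges G \<and> x \<notin> {u, v} \<and> {u, v} \<noteq> e \<longrightarrow> f u \<noteq> f v"
    using assms(4) unfolding colorable_def by auto
  let ?g = "\<lambda>v. if v \<in> {x, y} then c else f v"
  have "?g u \<noteq> ?g v" if "u \<in> verts G" "v \<in> verts G" "{u, v} \<in> edges G" for u v
  proof -
    have "u \<noteq> v"
      using finite_simple_graph_edge_neq[OF assms(1) that(3)] .
    moreover have "{u, v} \<noteq> {x, y}"
      using assms(2) that(3) by auto
    ultimately consider "u \<in> {x, y}" "v \<notin> {x, y}" | "u \<notin> {x, y}" "v \<in> {x, y}"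
      | "u \<notin> {x, y}" "v \<notin> {x, y}"
      by auto
    then show ?thesis
    proof cases
      case 1
      then show ?thesis
        using f(1) that(2) by auto
    next
      case 2
      then show ?thesis
        using f(1) that(1) by auto
    next
      case 3
      then have "{u, v} \<noteq> e"
        using \<open>y \<in> e\<close> by auto
      then show ?thesis
        using f(2) that 3 by auto
    qed
  qed
  moreover have "?g v < Suc c" if "v \<in> verts G" for v
    using f(1) that by (auto intro: less_SucI)
  ultimately show ?thesis
    unfolding colorable_def by (intro exI[of _ ?g]) blast
qed

lemma vertex_critical_has_neighbour:
  assumes G: "finite_simple_graph G" and "vertex_critical G" "2 \<le> chromatic_number G"
    and "y \<in> verts G"
  shows "\<exists>z. {y, z} \<in> edges G"
proof (rule ccontr)
  assume no_neighbour: "\<nexists>z. {y, z} \<in> edges G"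
  have isolated: "\<forall>e\<in>edges G. y \<notin> e"
  proof (intro ballI notI)
    fix e assume e: "e \<in> edges G" "y \<in> e"
    obtain a b where "e = {a, b}"
      using finite_simple_graph_edgeD(2)[OF G e(1)] unfolding card_2_iff by blast
    with e(2) have "e = {y, b} \<or> e = {y, a}"
      by auto
    then show False
      using e(1) no_neighbour by blast
  qed
  have "chromatic_number (delete_vertex G y) \<le> chromatic_number G - 1"
    using assms(2,4) by (auto simp: vertex_critical_def)
  then have "colorable (delete_vertex G y) (chromatic_number G - 1)"
    by (rule colorable_mono[OF colorable_chromatic_number[OF finite_simple_graph_delete_vertex[OF G]]])
  then have "colorable G (chromatic_number G - 1)"
    by (rule colorable_add_isolated_vertex[OF isolated]) (use assms(3) in arith)
  then have "chromatic_number G \<le> chromatic_number G - 1"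
    by (rule chromatic_number_le)
  with assms(3) show False
    by arith
qed

lemma mixed_double_critical_adjacent:
  assumes G: "finite_simple_graph G" and critical: "mixed_double_critical G"
    and "3 \<le> chromatic_number G" "x \<in> verts G" "y \<in> verts G" "x \<noteq> y"
  shows "{x, y} \<in> edges G"
proof (rule ccontr)
  assume nonadjacent: "{x, y} \<notin> edges G"
  have "vertex_critical G"
    using critical by (simp add: mixed_double_critical_def)
  then obtain z where z: "{y, z} \<in> edges G"
    using vertex_critical_has_neighbour[OF G] assms(3,5) by fastforce
  have "z \<noteq> x"
  proof
    assume "z = x"
    with z have "{x, y} \<in> edges G"
      by (simp add: insert_commute)
    with nonadjacent show False ..
  qed
  with z \<open>x \<noteq> y\<close> have "{y, z} \<in> edges (delete_vertex G x)"
    by simp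
  with critical \<open>x \<in> verts G\<close>
  have "chromatic_number (delete_edge (delete_vertex G x) {y, z}) \<le> chromatic_number G - 2"
    by (simp add: mixed_double_critical_def)
  then have "colorable (delete_edge (delete_vertex G x) {y, z}) (chromatic_number G - 2)"
    by (rule colorable_mono[OF colorable_chromatic_number[OF
          finite_simple_graph_delete_edge[OF finite_simple_graph_delete_vertex[OF G]]]])
  then have "colorable G (Suc (chromatic_number G - 2))"
    by (rule colorable_recolor_nonadjacent_pair[OF G nonadjacent, rotated]) simp
  then have "chromatic_number G \<le> Suc (chromatic_number G - 2)"
    by (rule chromatic_number_le)
  with assms(3) show False
    by arith
qed

lemma complete_mixed_double_critical:
  assumes G: "finite_simple_graph G"
    and "\<forall>u\<in>verts G. \<forall>v\<in>verts G. u \<noteq> v \<longrightarrow> {u, v} \<in> edges G"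
  shows "mixed_double_critical G"
proof -
  have fin: "finite (verts G)"
    using G by (simp add: finite_simple_graph_def)
  have chi: "chromatic_number G = card (verts G)"
    using chromatic_number_complete[OF assms] .
  have "vertex_critical G"
    unfolding vertex_critical_def
  proof
    fix v assume v: "v \<in> verts G"
    have "chromatic_number (delete_vertex G v) \<le> card (verts G - {v})"
      using chromatic_number_le[OF colorable_card_verts[OF finite_simple_graph_delete_vertex[OF G]]]
      by simp
    also have "\<dots> < card (verts G)"
      using fin v by (rule card_Diff1_less)
    finally show "chromatic_number (delete_vertex G v) < chromatic_number G"
      using chi by simp
  qed
  moreover have "chromatic_number (delete_edge (delete_vertex G x) e) \<le> chromatic_number G - 2"
    if x: "x \<in> verts G" and e: "e \<in> edges (delete_vertex G x)" for x e
  proof -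
    let ?H = "delete_edge (delete_vertex G x) e"
    have e_G: "e \<in> edges G" "x \<notin> e"
      using e by simp_all
    obtain a b where ab: "e = {a, b}" "a \<noteq> b"
      using finite_simple_graph_edgeD(2)[OF G e_G(1)] unfolding card_2_iff by blast
    have "a \<in> verts ?H" "b \<in> verts ?H"
      using finite_simple_graph_edgeD(1)[OF G e_G(1)] e_G(2) ab(1) by auto
    have "colorable ?H (card (verts ?H) - 1)"
    proof (rule colorable_identify_nonadjacent[OF _ \<open>a \<in> verts ?H\<close> \<open>b \<in> verts ?H\<close> ab(2)])
      show "finite_simple_graph ?H"
        using G by (intro finite_simple_graph_delete_edge finite_simple_graph_delete_vertex)
      show "{a, b} \<notin> edges ?H"
        using ab(1) by simp
    qed
    moreover have "card (verts ?H) - 1 = chromatic_number G - 2"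
      using fin x chi by (simp add: card_Diff_singleton)
    ultimately show ?thesis
      using chromatic_number_le by metis
  qed
  ultimately show ?thesis
    by (simp add: mixed_double_critical_def)
qed

theorem theorem34:
  fixes G :: "'a graph" and k :: nat
  assumes "finite_simple_graph G" and "k \<ge> 3"
  shows "(chromatic_number G = k \<and> mixed_double_critical G) \<longleftrightarrow> is_complete_graph G k"
proof
  assume critical: "chromatic_number G = k \<and> mixed_double_critical G"
  then have complete: "\<forall>u\<in>verts G. \<forall>v\<in>verts G. u \<noteq> v \<longrightarrow> {u, v} \<in> edges G"
    using mixed_double_critical_adjacent[OF assms(1)] assms(2) by blast
  then show "is_complete_graph G k"
    using critical chromatic_number_complete[OF assms(1)] edges_eq_all_pairs_iff[OF assms(1)]
    by (simp add: is_complete_graph_def)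
next
  assume "is_complete_graph G k"
  then have "card (verts G) = k"
    and complete: "\<forall>u\<in>verts G. \<forall>v\<in>verts G. u \<noteq> v \<longrightarrow> {u, v} \<in> edges G"
    using edges_eq_all_pairs_iff[OF assms(1)] by (auto simp: is_complete_graph_def)
  then show "chromatic_number G = k \<and> mixed_double_critical G"
    using chromatic_number_complete[OF assms(1) complete]
      complete_mixed_double_critical[OF assms(1) complete] by simp
qed

end
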